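(* Let $\Omega_1,\Omega_2\subset\mathbb{R}^n$ be bounded measurable sets, $\Omega:=\Omega_1\times\Omega_2$, and let $\Phi$ be a quasi-Young's function satisfying either (1) there is $C>0$ with $\Phi(xy)\le C\,\Phi(x)\Phi(y)$ for all $x,y\ge 0$; or (2) there are $C_1,C_2\ge 0$ with $\Phi(xy)\le C_1\,x\,\Phi(y)+C_2\,\Phi(x)\,y$ for all $x,y\ge0$, and $\Phi(t)/t\to\infty$ as $t\to\infty$. If $\mu_i\in L^\Phi(\Omega_i)$ for $i=1,2$, then $\mu_1\otimes\mu_2\in L^\Phi(\Omega)$, where $(\mu_1\otimes\mu_2)(x_1,x_2):=\mu_1(x_1)\mu_2(x_2)$.
   Context: A Young's function is a function of the form $\Phi(t)=\int_0^t\varphi(s)\,ds$ for $t\ge 0$, where $\varphi:[0,\infty)\to[0,\infty]$ is increasing and lower semicontinuous with $\varphi(0)=0$, and $\varphi$ is neither identically zero nor identically $+\infty$ on $(0,\infty)$. A quasi-Young's function induced by a Young's function $\Phi$ is a convex, lower semicontinuous function $\check\Phi:[0,\infty)\to(-\infty,\infty]$, bounded from below, for which there is $t_0\ge 0$ with $\check\Phi(t)=\Phi(t)-\Phi(t_0)$ for all $t\ge t_0$ and $\check\Phi(t)\le 0$ for all $t<t_0$ (every Young's function is a quasi-Young's function, with $t_0=0$). For a measurable set $U\subset\mathbb{R}^d$ and a quasi-Young's function $\Phi$, the Luxemburg norm of a measurable $f:U\to\mathbb{R}$ is $\|f\|_\Phi:=\inf\{\lambda\ge 0:\int_U\Phi(|f|/\lambda)\,dx\le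 1\}$, and the Orlicz space is $L^\Phi(U):=\{f:U\to\mathbb{R}\text{ measurable}:\|f\|_\Phi<\infty\}$. *)

theory Defs
  imports "HOL-Analysis.Analysis"
begin

text \<open>Lower semicontinuity on [0,oo) of an extended-valued function (only the values on
  [0,oo) matter; all functions below are regarded as functions on [0,oo)).\<close>
definition lsc_nonneg :: "(real \<Rightarrow> 'b::{linorder_topology,complete_linorder}) \<Rightarrow> bool" where
  "lsc_nonneg f \<longleftrightarrow> (\<forall>t\<ge>0. f t \<le> Liminf (at t within {0..}) f)"

definition young_fun :: "(real \<Rightarrow> ereal) \<Rightarrow> bool" where
  "young_fun \<Phi> \<longleftrightarrow> (\<exists>\<phi> :: real \<Rightarrow> ennreal.
      mono_on {0..} \<phi> \<and> lsc_nonneg \<phi> \<and> \<phi> 0 = 0 \<and>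
      (\<exists>s>0. \<phi> s \<noteq> 0) \<and> (\<exists>s>0. \<phi> s \<noteq> \<infinity>) \<and>
      (\<forall>t\<ge>0. \<Phi> t = enn2ereal (set_nn_integral lborel {0..t} \<phi>)))"

definition convex_nonneg :: "(real \<Rightarrow> ereal) \<Rightarrow> bool" where
  "convex_nonneg f \<longleftrightarrow> (\<forall>x\<ge>0. \<forall>y\<ge>0. \<forall>u::real. 0 \<le> u \<and> u \<le> 1 \<longrightarrow>
      f (u * x + (1 - u) * y) \<le> ereal u * f x + ereal (1 - u) * f y)"

definition quasi_young_fun :: "(real \<Rightarrow> ereal) \<Rightarrow> bool" where
  "quasi_young_fun \<Phi> \<longleftrightarrow>
     convex_nonneg \<Phi> \<and> lsc_nonneg \<Phi> \<and> (\<forall>t\<ge>0. \<Phi> t \<noteq> -\<infinity>) \<and>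
     (\<exists>c::real. \<forall>t\<ge>0. ereal c \<le> \<Phi> t) \<and>
     (\<exists>\<Psi> t0. young_fun \<Psi> \<and> t0 \<ge> 0 \<and> \<Psi> t0 \<noteq> \<infinity> \<and>
        (\<forall>t\<ge>t0. \<Phi> t = \<Psi> t - \<Psi> t0) \<and> (\<forall>t. 0 \<le> t \<and> t < t0 \<longrightarrow> \<Phi> t \<le> 0))"

definition ereal_integral_on :: "'a::euclidean_space set \<Rightarrow> ('a \<Rightarrow> ereal) \<Rightarrow> ereal" where
  "ereal_integral_on U g =
     enn2ereal (\<integral>\<^sup>+ x. e2ennreal (max 0 (g x)) \<partial>lebesgue_on U)
     - enn2ereal (\<integral>\<^sup>+ x. e2ennreal (max 0 (- g x)) \<partial>lebesgue_on U)"

text \<open>Luxemburg norm; the infimum is over lambda > 0 (convention Phi(t/0)=oo for t>0).\<close>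
definition luxemburg_norm :: "(real \<Rightarrow> ereal) \<Rightarrow> 'a::euclidean_space set \<Rightarrow> ('a \<Rightarrow> real) \<Rightarrow> ereal" where
  "luxemburg_norm \<Phi> U f =
     Inf {ereal l | l. l > 0 \<and> ereal_integral_on U (\<lambda>x. \<Phi> (\<bar>f x\<bar> / l)) \<le> 1}"

definition orlicz_space :: "(real \<Rightarrow> ereal) \<Rightarrow> 'a::euclidean_space set \<Rightarrow> ('a \<Rightarrow> real) set" where
  "orlicz_space \<Phi> U = {f. f \<in> borel_measurable (lebesgue_on U) \<and> luxemburg_norm \<Phi> U f < \<infinity>}"

definition tensor :: "('a \<Rightarrow> real) \<Rightarrow> ('b \<Rightarrow> real) \<Rightarrow> ('a \<times> 'b \<Rightarrow> real)" where
  "tensor \<mu>1 \<mu>2 = (\<lambda>(x1, x2). \<mu>1 x1 * \<mu>2 x2)"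

end

theory Submission
  imports Defs
begin

text \<open>Both growth conditions give a bound
  \<open>\<Phi>\<^sup>+(xy) \<le> D (\<Phi>\<^sup>+(x) + E) (\<Phi>\<^sup>+(y) + E)\<close>; under the second one because \<open>\<Phi>(t)/t \<rightarrow> \<infinity>\<close>
  forces \<open>t \<le> \<Phi>\<^sup>+(t) + T\<close>. If \<open>\<lambda>\<^sub>i\<close> has modular at most 1 for \<open>\<mu>\<^sub>i\<close>, then
  \<open>\<Phi>\<^sup>+(|\<mu>\<^sub>i|/\<lambda>\<^sub>i) + E\<close> is integrable on the bounded set \<open>\<Omega>\<^sub>i\<close> (as \<open>\<Phi>\<close> is bounded below), so by
  Tonelli \<open>\<Phi>\<^sup>+(|\<mu>\<^sub>1 \<otimes> \<mu>\<^sub>2|/(\<lambda>\<^sub>1\<lambda>\<^sub>2))\<close> is integrable on \<open>\<Omega>\<close>. Convexity and \<open>\<Phi>(0) \<le> 0\<close> give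
  \<open>\<Phi>(st) \<le> s\<Phi>(t)\<close> for \<open>0 \<le> s \<le> 1\<close>, so dividing by a further small \<open>s\<close> pushes the modular
  below 1.\<close>

lemma e2ennreal_max_0 [simp]: "e2ennreal (max 0 x) = e2ennreal x"
  by (cases "0 \<le> x") (auto simp: max_def e2ennreal_neg)

lemma e2ennreal_ereal_mult:
  assumes "0 \<le> s"
  shows "e2ennreal (ereal s * x) = ennreal s * e2ennreal x"
  using assms
  by (cases x; cases "s = 0") (auto simp: ennreal_mult' e2ennreal_neg ennreal_mult_top)

lemma ereal_integral_on_le_pos_part:
  "ereal_integral_on U g \<le> enn2ereal (\<integral>\<^sup>+x. e2ennreal (g x) \<partial>lebesgue_on U)"
  unfolding ereal_integral_on_def by (simp add: ereal_diff_le_self)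

lemma nn_integral_pos_part_finite:
  assumes U: "U \<in> lmeasurable" and lower: "\<And>x. x \<in> U \<Longrightarrow> ereal c \<le> g x"
    and int: "ereal_integral_on U g < \<infinity>"
  shows "(\<integral>\<^sup>+x. e2ennreal (g x) \<partial>lebesgue_on U) < \<infinity>"
proof -
  define pos where "pos = (\<integral>\<^sup>+x. e2ennreal (g x) \<partial>lebesgue_on U)"
  define neg where "neg = (\<integral>\<^sup>+x. e2ennreal (- g x) \<partial>lebesgue_on U)"
  have "neg \<le> (\<integral>\<^sup>+x. ennreal \<bar>c\<bar> \<partial>lebesgue_on U)"
    unfolding neg_def
  proof (rule nn_integral_mono)
    fix x assume "x \<in> space (lebesgue_on U)"
    then have "- g x \<le> ereal \<bar>c\<bar>"
      using lower[of x] by (cases "g x") auto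
    then show "e2ennreal (- g x) \<le> ennreal \<bar>c\<bar>"
      using e2ennreal_mono by fastforce
  qed
  also have "\<dots> = ennreal \<bar>c\<bar> * emeasure lebesgue U"
    using U by (simp add: fmeasurable_def emeasure_restrict_space)
  also have "\<dots> < \<infinity>"
    using fmeasurableD2[OF U] by (simp add: ennreal_mult_less_top less_top)
  finally have "enn2ereal neg \<noteq> \<infinity>" by simp
  moreover have "enn2ereal pos - enn2ereal neg < \<infinity>"
    using int by (simp add: ereal_integral_on_def pos_def neg_def)
  ultimately show ?thesis
    unfolding pos_def[symmetric] by (cases pos) auto
qed

subsection \<open>Quasi-Young's functions\<close>

lemma quasi_young_fun_bounded_below:
  assumes "quasi_young_fun \<Phi>"
  obtains c where "\<And>t. 0 \<le> t \<Longrightarrow> ereal c \<le> \<Phi> t"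
  using assms unfolding quasi_young_fun_def by blast

lemma quasi_young_fun_nonpos_0:
  assumes "quasi_young_fun \<Phi>"
  shows "\<Phi> 0 \<le> 0"
proof -
  obtain \<Psi> t0 where \<Psi>: "young_fun \<Psi>" "t0 \<ge> 0" "\<Psi> t0 \<noteq> \<infinity>" "\<forall>t\<ge>t0. \<Phi> t = \<Psi> t - \<Psi> t0"
      "\<forall>t. 0 \<le> t \<and> t < t0 \<longrightarrow> \<Phi> t \<le> 0"
    using assms unfolding quasi_young_fun_def by blast
  show ?thesis
  proof (cases "t0 = 0")
    case True
    have "\<Psi> 0 \<ge> 0"
      using \<Psi>(1) unfolding young_fun_def by force
    with \<Psi> True show ?thesis by (cases "\<Psi> 0") auto
  qed (use \<Psi> in auto)
qed

lemma quasi_young_fun_scale: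
  assumes qy: "quasi_young_fun \<Phi>" and s: "0 \<le> s" "s \<le> 1" and t: "0 \<le> t"
  shows "\<Phi> (s * t) \<le> ereal s * \<Phi> t"
proof -
  have "\<Phi> (s * t + (1 - s) * 0) \<le> ereal s * \<Phi> t + ereal (1 - s) * \<Phi> 0"
    using qy s t unfolding quasi_young_fun_def convex_nonneg_def by (metis order_refl)
  moreover have "ereal (1 - s) * \<Phi> 0 \<le> 0"
    using quasi_young_fun_nonpos_0[OF qy] s by (simp add: ereal_mult_le_0_iff)
  ultimately show ?thesis
    using add_left_mono[of "ereal (1 - s) * \<Phi> 0" 0 "ereal s * \<Phi> t"] by simp
qed

lemma quasi_young_fun_scale_pos_part:
  assumes "quasi_young_fun \<Phi>" "0 \<le> s" "s \<le> 1" "0 \<le> t"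
  shows "e2ennreal (\<Phi> (s * t)) \<le> ennreal s * e2ennreal (\<Phi> t)"
  using e2ennreal_mono[OF quasi_young_fun_scale[OF assms]] assms(2)
  by (simp add: e2ennreal_ereal_mult)

lemma borel_measurable_lsc_nonneg_abs:
  fixes f :: "real \<Rightarrow> ereal"
  assumes lsc: "lsc_nonneg f"
  shows "(\<lambda>t. f \<bar>t\<bar>) \<in> borel_measurable borel"
proof (rule borel_measurableI_greater)
  fix y
  have "open {t. y < f \<bar>t\<bar>}"
    unfolding open_dist
  proof (intro ballI)
    fix t assume "t \<in> {t. y < f \<bar>t\<bar>}"
    then have "y < Liminf (at \<bar>t\<bar> within {0..}) f"
      using lsc unfolding lsc_nonneg_def by (metis abs_ge_zero mem_Collect_eq order_less_le_trans)
    then have "eventually (\<lambda>s. y < f s) (at \<bar>t\<bar> within {0..})"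
      using le_Liminf_iff by blast
    then obtain d where d: "d > 0" "\<And>s. s \<in> {0..} \<Longrightarrow> s \<noteq> \<bar>t\<bar> \<Longrightarrow> dist s \<bar>t\<bar> < d \<Longrightarrow> y < f s"
      unfolding eventually_at by blast
    have "y < f \<bar>u\<bar>" if "dist u t < d" for u
      using that d(2)[of "\<bar>u\<bar>"] \<open>t \<in> {t. y < f \<bar>t\<bar>}\<close>
      by (cases "\<bar>u\<bar> = \<bar>t\<bar>") (auto simp: dist_real_def)
    with d(1) show "\<exists>e>0. \<forall>u. dist u t < e \<longrightarrow> u \<in> {t. y < f \<bar>t\<bar>}" by auto
  qed
  then show "{t \<in> space borel. y < f \<bar>t\<bar>} \<in> sets borel" by simp
qed

subsection \<open>Growth of \<open>\<Phi>\<close> on products\<close>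

definition product_dominated :: "(real \<Rightarrow> ereal) \<Rightarrow> real \<Rightarrow> real \<Rightarrow> bool" where
  "product_dominated \<Phi> D E \<longleftrightarrow> (\<forall>x\<ge>0. \<forall>y\<ge>0.
     e2ennreal (\<Phi> (x * y)) \<le> ennreal D * (e2ennreal (\<Phi> x) + ennreal E) * (e2ennreal (\<Phi> y) + ennreal E))"

lemma mult_le_shifted_pos_parts:
  fixes a b E :: real
  assumes "- E \<le> a" "- E \<le> b" "0 \<le> E"
  shows "a * b \<le> (max 0 a + E) * (max 0 b + E)"
proof (cases "0 \<le> a \<and> 0 \<le> b")
  case True
  then show ?thesis using assms by (simp add: mult_mono)
next
  case False
  then have "a * b \<le> E * E"
    using assms by (smt (verit) mult_minus_left mult_minus_right mult_mono mult_nonneg_nonpos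
        mult_nonpos_nonneg)
  also have "\<dots> \<le> (max 0 a + E) * (max 0 b + E)"
    using assms by (simp add: mult_mono)
  finally show ?thesis .
qed

lemma e2ennreal_le_shifted_product:
  assumes "u \<noteq> -\<infinity>" "v \<noteq> -\<infinity>" "0 < D" "0 < E"
    and bound: "\<And>a b. u = ereal a \<Longrightarrow> v = ereal b \<Longrightarrow> z \<le> ereal (D * (max 0 a + E) * (max 0 b + E))"
  shows "e2ennreal z \<le> ennreal D * (e2ennreal u + ennreal E) * (e2ennreal v + ennreal E)"
proof (cases "u = \<infinity> \<or> v = \<infinity>")
  case True
  then show ?thesis
    using \<open>0 < D\<close> \<open>0 < E\<close> by (auto simp: ennreal_mult_eq_top_iff)
next
  case False
  then obtain a b where ab: "u = ereal a" "v = ereal b"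
    using assms(1,2) by (metis ereal_cases)
  have shift: "ennreal (max 0 r + E) = ennreal r + ennreal E" for r
    using \<open>0 < E\<close> by (cases "0 \<le> r") (auto simp: ennreal_plus max_def ennreal_neg)
  have "e2ennreal z \<le> e2ennreal (ereal (D * (max 0 a + E) * (max 0 b + E)))"
    using bound[OF ab] by (rule e2ennreal_mono)
  also have "\<dots> = ennreal D * ennreal (max 0 a + E) * ennreal (max 0 b + E)"
    using assms(3,4) by (simp add: ennreal_mult)
  finally show ?thesis
    using ab by (simp add: shift)
qed

lemma submultiplicative_product_dominated:
  assumes qy: "quasi_young_fun \<Phi>" and "C > 0"
    and mult: "\<forall>x\<ge>0. \<forall>y\<ge>0. \<Phi> (x * y) \<le> ereal C * \<Phi> x * \<Phi> y"
  obtains E where "E > 0" "product_dominated \<Phi> C E"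
proof -
  obtain c where c: "\<And>t. 0 \<le> t \<Longrightarrow> ereal c \<le> \<Phi> t"
    using quasi_young_fun_bounded_below[OF qy] by blast
  define E where "E = \<bar>c\<bar> + 1"
  have "product_dominated \<Phi> C E"
    unfolding product_dominated_def
  proof (intro allI impI)
    fix x y :: real assume xy: "0 \<le> x" "0 \<le> y"
    show "e2ennreal (\<Phi> (x * y)) \<le> ennreal C * (e2ennreal (\<Phi> x) + ennreal E) * (e2ennreal (\<Phi> y) + ennreal E)"
    proof (rule e2ennreal_le_shifted_product)
      show "\<Phi> x \<noteq> -\<infinity>" "\<Phi> y \<noteq> -\<infinity>"
        using c[OF xy(1)] c[OF xy(2)] by auto
      show "0 < C" "0 < E" using \<open>C > 0\<close> by (auto simp: E_def)
      fix a b assume ab: "\<Phi> x = ereal a" "\<Phi> y = ereal b"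
      have "- E \<le> a" "- E \<le> b"
        using c[OF xy(1)] c[OF xy(2)] ab by (auto simp: E_def)
      then have "C * (a * b) \<le> C * ((max 0 a + E) * (max 0 b + E))"
        using \<open>C > 0\<close> by (intro mult_left_mono mult_le_shifted_pos_parts) (auto simp: E_def)
      moreover have "\<Phi> (x * y) \<le> ereal (C * (a * b))"
        using mult[rule_format, OF xy] ab by (simp add: mult.assoc)
      ultimately show "\<Phi> (x * y) \<le> ereal (C * (max 0 a + E) * (max 0 b + E))"
        by (simp add: mult.assoc order_trans)
    qed
  qed
  moreover have "E > 0" by (simp add: E_def)
  ultimately show ?thesis using that by blast
qed

lemma superlinear_le_pos_part:
  fixes \<Phi> :: "real \<Rightarrow> ereal"
  assumes "((\<lambda>t. \<Phi> t / ereal t) \<longlongrightarrow> \<infinity>) at_top"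
  obtains T where "T \<ge> 0" "\<And>x a. 0 \<le> x \<Longrightarrow> \<Phi> x = ereal a \<Longrightarrow> x \<le> max 0 a + T"
proof -
  obtain N where N: "\<And>t. N \<le> t \<Longrightarrow> 1 < \<Phi> t / ereal t"
    using order_tendstoD(1)[OF assms, of 1] unfolding eventually_at_top_linorder by auto
  have "x \<le> max 0 a + max N 1" if "0 \<le> x" "\<Phi> x = ereal a" for x a
  proof (cases "max N 1 \<le> x")
    case True
    then have "1 < ereal (a / x)" using N[of x] that by simp
    then show ?thesis using True by (simp add: field_simps)
  qed auto
  then show ?thesis using that[of "max N 1"] by simp
qed

lemma mult_le_mult_of_nonneg_left:
  fixes p q P Q :: real
  assumes "0 \<le> p" "p \<le> P" "q \<le> Q" "0 \<le> Q"
  shows "p * q \<le> P * Q"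
proof (cases "0 \<le> q")
  case True
  then show ?thesis using assms by (simp add: mult_mono)
next
  case False
  then show ?thesis using assms by (smt (verit) mult_nonneg_nonneg mult_nonneg_nonpos)
qed

lemma superlinear_product_dominated:
  assumes qy: "quasi_young_fun \<Phi>" and C: "C1 \<ge> 0" "C2 \<ge> 0"
    and mult: "\<forall>x\<ge>0. \<forall>y\<ge>0. \<Phi> (x * y) \<le> ereal C1 * ereal x * \<Phi> y + ereal C2 * \<Phi> x * ereal y"
    and lim: "((\<lambda>t. \<Phi> t / ereal t) \<longlongrightarrow> \<infinity>) at_top"
  obtains E where "E > 0" "product_dominated \<Phi> (C1 + C2 + 1) E"
proof -
  obtain c where c: "\<And>t. 0 \<le> t \<Longrightarrow> ereal c \<le> \<Phi> t"
    using quasi_young_fun_bounded_below[OF qy] by blast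
  obtain T where T: "T \<ge> 0" "\<And>x a. 0 \<le> x \<Longrightarrow> \<Phi> x = ereal a \<Longrightarrow> x \<le> max 0 a + T"
    using superlinear_le_pos_part[OF lim] by blast
  define E where "E = T + \<bar>c\<bar> + 1"
  have "product_dominated \<Phi> (C1 + C2 + 1) E"
    unfolding product_dominated_def
  proof (intro allI impI)
    fix x y :: real assume xy: "0 \<le> x" "0 \<le> y"
    show "e2ennreal (\<Phi> (x * y)) \<le> ennreal (C1 + C2 + 1) * (e2ennreal (\<Phi> x) + ennreal E) * (e2ennreal (\<Phi> y) + ennreal E)"
    proof (rule e2ennreal_le_shifted_product)
      show "\<Phi> x \<noteq> -\<infinity>" "\<Phi> y \<noteq> -\<infinity>"
        using c[OF xy(1)] c[OF xy(2)] by auto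
      show "0 < C1 + C2 + 1" "0 < E" using C T by (auto simp: E_def)
      fix a b assume ab: "\<Phi> x = ereal a" "\<Phi> y = ereal b"
      define A B where "A = max 0 a + E" and "B = max 0 b + E"
      have "x \<le> A" "y \<le> B" "a \<le> A" "b \<le> B" "0 \<le> A" "0 \<le> B"
        using T(2)[OF xy(1) ab(1)] T(2)[OF xy(2) ab(2)] T(1) by (auto simp: A_def B_def E_def)
      then have "C1 * (x * b) \<le> C1 * (A * B)" "C2 * (y * a) \<le> C2 * (B * A)"
        using xy C by (simp_all add: mult_left_mono mult_le_mult_of_nonneg_left)
      then have "C1 * x * b + C2 * a * y \<le> (C1 + C2 + 1) * A * B"
        using mult_nonneg_nonneg[OF \<open>0 \<le> A\<close> \<open>0 \<le> B\<close>] by (simp add: algebra_simps)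
      moreover have "\<Phi> (x * y) \<le> ereal (C1 * x * b + C2 * a * y)"
        using mult[rule_format, OF xy] ab by simp
      ultimately show "\<Phi> (x * y) \<le> ereal ((C1 + C2 + 1) * (max 0 a + E) * (max 0 b + E))"
        unfolding A_def B_def by (simp add: order_trans)
    qed
  qed
  moreover have "E > 0" using T by (simp add: E_def)
  ultimately show ?thesis using that by blast
qed

lemma product_dominated_scaled:
  assumes qy: "quasi_young_fun \<Phi>" and dom: "product_dominated \<Phi> D E"
    and s: "0 \<le> s" "s \<le> 1" and ab: "0 \<le> a" "0 \<le> b"
  shows "e2ennreal (\<Phi> (s * (a * b)))
    \<le> ennreal s * (ennreal D * (e2ennreal (\<Phi> a) + ennreal E) * (e2ennreal (\<Phi> b) + ennreal E))"
proof -
  have "e2ennreal (\<Phi> (s * (a * b))) \<le> ennreal s * e2ennreal (\<Phi> (a * b))"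
    using s ab by (intro quasi_young_fun_scale_pos_part[OF qy]) auto
  also have "\<dots> \<le> ennreal s * (ennreal D * (e2ennreal (\<Phi> a) + ennreal E) * (e2ennreal (\<Phi> b) + ennreal E))"
    using dom ab unfolding product_dominated_def by (intro mult_left_mono) auto
  finally show ?thesis .
qed

subsection \<open>Lebesgue measure on products\<close>

lemma borel_measurable_lebesgue_compose:
  fixes f :: "'a::euclidean_space \<Rightarrow> real" and h :: "'b::euclidean_space \<Rightarrow> 'a"
  assumes f: "f \<in> borel_measurable lebesgue" and h: "h \<in> lborel \<rightarrow>\<^sub>M lborel"
    and null: "\<And>N. N \<in> null_sets lborel \<Longrightarrow> h -` N \<in> null_sets lborel"
  shows "(\<lambda>z. f (h z)) \<in> borel_measurable lebesgue"
proof -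
  obtain g where g: "g \<in> borel_measurable lborel" "AE x in lborel. f x = g x"
    using completion_ex_borel_measurable_real[OF f] by blast
  obtain N where N: "N \<in> null_sets lborel" "{x \<in> space lborel. f x \<noteq> g x} \<subseteq> N"
    using g(2) unfolding eventually_ae_filter by blast
  have "AE z in lborel. g (h z) = f (h z)"
    by (rule AE_I'[OF null[OF N(1)]]) (use N(2) in force)
  then have "AE z in lebesgue. g (h z) = f (h z)"
    by (rule AE_completion)
  moreover have "(\<lambda>z. g (h z)) \<in> borel_measurable lebesgue"
    using measurable_compose[OF h g(1)] by (rule measurable_completion)
  ultimately show ?thesis
    by (rule borel_measurable_AE[rotated])
qed

lemma borel_measurable_lebesgue_fst:
  fixes f :: "'a::euclidean_space \<Rightarrow> real"
  assumes "f \<in> borel_measurable lebesgue"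
  shows "(\<lambda>z. f (fst z)) \<in> borel_measurable (lebesgue :: ('a \<times> 'b::euclidean_space) measure)"
proof (rule borel_measurable_lebesgue_compose[OF assms])
  show "fst \<in> (lborel :: ('a \<times> 'b) measure) \<rightarrow>\<^sub>M lborel"
    using measurable_fst[of lborel lborel] by (simp add: lborel_prod)
  fix N :: "'a set" assume "N \<in> null_sets lborel"
  then have "N \<times> UNIV \<in> null_sets (lborel \<Otimes>\<^sub>M (lborel :: 'b measure))"
    by (intro lborel.times_in_null_sets1) auto
  then show "fst -` N \<in> null_sets (lborel :: ('a \<times> 'b) measure)"
    by (simp add: lborel_prod vimage_fst)
qed

lemma borel_measurable_lebesgue_snd:
  fixes f :: "'b::euclidean_space \<Rightarrow> real"
  assumes "f \<in> borel_measurable lebesgue"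
  shows "(\<lambda>z. f (snd z)) \<in> borel_measurable (lebesgue :: ('a::euclidean_space \<times> 'b) measure)"
proof (rule borel_measurable_lebesgue_compose[OF assms])
  show "snd \<in> (lborel :: ('a \<times> 'b) measure) \<rightarrow>\<^sub>M lborel"
    using measurable_snd[of lborel lborel] by (simp add: lborel_prod)
  fix N :: "'b set" assume "N \<in> null_sets lborel"
  then have "UNIV \<times> N \<in> null_sets ((lborel :: 'a measure) \<Otimes>\<^sub>M lborel)"
    by (intro lborel.times_in_null_sets2) auto
  then show "snd -` N \<in> null_sets (lborel :: ('a \<times> 'b) measure)"
    by (simp add: lborel_prod vimage_snd)
qed

lemma borel_measurable_lebesgue_tensor:
  fixes f :: "'a::euclidean_space \<Rightarrow> real" and g :: "'b::euclidean_space \<Rightarrow> real"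
  assumes "f \<in> borel_measurable lebesgue" "g \<in> borel_measurable lebesgue"
  shows "tensor f g \<in> borel_measurable lebesgue"
proof -
  have "(\<lambda>z. f (fst z) * g (snd z)) \<in> borel_measurable (lebesgue :: ('a \<times> 'b) measure)"
    using borel_measurable_lebesgue_fst[OF assms(1)] borel_measurable_lebesgue_snd[OF assms(2)]
    by (rule borel_measurable_times)
  then show ?thesis
    by (simp add: tensor_def case_prod_beta')
qed

lemma sets_lebesgue_Times:
  fixes A :: "'a::euclidean_space set" and B :: "'b::euclidean_space set"
  assumes "A \<in> sets lebesgue" "B \<in> sets lebesgue"
  shows "A \<times> B \<in> sets lebesgue"
proof -
  have "tensor (indicator A) (indicator B) = (indicator (A \<times> B) :: _ \<Rightarrow> real)"
    by (auto simp: tensor_def indicator_def fun_eq_iff)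
  then have "(indicator (A \<times> B) :: _ \<Rightarrow> real) \<in> borel_measurable lebesgue"
    using borel_measurable_lebesgue_tensor[of "indicator A" "indicator B"] assms by simp
  then show ?thesis
    by (subst (asm) borel_measurable_indicator_iff) simp
qed

lemma borel_measurable_lebesgue_on_tensor:
  fixes \<mu>1 :: "'a::euclidean_space \<Rightarrow> real" and \<mu>2 :: "'b::euclidean_space \<Rightarrow> real"
  assumes \<Omega>: "\<Omega>1 \<in> sets lebesgue" "\<Omega>2 \<in> sets lebesgue"
    and \<mu>: "\<mu>1 \<in> borel_measurable (lebesgue_on \<Omega>1)" "\<mu>2 \<in> borel_measurable (lebesgue_on \<Omega>2)"
  shows "tensor \<mu>1 \<mu>2 \<in> borel_measurable (lebesgue_on (\<Omega>1 \<times> \<Omega>2))"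
proof (rule borel_measurable_if_D)
  have "tensor (\<lambda>x. if x \<in> \<Omega>1 then \<mu>1 x else 0) (\<lambda>x. if x \<in> \<Omega>2 then \<mu>2 x else 0)
      \<in> borel_measurable lebesgue"
    using \<Omega> \<mu> by (intro borel_measurable_lebesgue_tensor borel_measurable_if_I)
  also have "tensor (\<lambda>x. if x \<in> \<Omega>1 then \<mu>1 x else 0) (\<lambda>x. if x \<in> \<Omega>2 then \<mu>2 x else 0)
      = (\<lambda>z. if z \<in> \<Omega>1 \<times> \<Omega>2 then tensor \<mu>1 \<mu>2 z else 0)"
    by (auto simp: tensor_def fun_eq_iff)
  finally show "(\<lambda>z. if z \<in> \<Omega>1 \<times> \<Omega>2 then tensor \<mu>1 \<mu>2 z else 0) \<in> borel_measurable lebesgue" .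
qed

lemma (in pair_sigma_finite) nn_integral_fst_snd_mult:
  assumes "f \<in> borel_measurable M1" "g \<in> borel_measurable M2"
  shows "(\<integral>\<^sup>+z. f (fst z) * g (snd z) \<partial>(M1 \<Otimes>\<^sub>M M2)) = integral\<^sup>N M1 f * integral\<^sup>N M2 g"
proof -
  have "(\<integral>\<^sup>+z. f (fst z) * g (snd z) \<partial>(M1 \<Otimes>\<^sub>M M2)) = (\<integral>\<^sup>+x. \<integral>\<^sup>+y. f x * g y \<partial>M2 \<partial>M1)"
    using M2.nn_integral_fst[of "\<lambda>z. f (fst z) * g (snd z)"] assms by simp
  also have "\<dots> = (\<integral>\<^sup>+x. f x * integral\<^sup>N M2 g \<partial>M1)"
    using assms(2) by (simp add: nn_integral_cmult)
  also have "\<dots> = integral\<^sup>N M1 f * integral\<^sup>N M2 g"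
    using assms(1) by (simp add: nn_integral_multc)
  finally show ?thesis .
qed

lemma completion_ex_borel_majorant:
  fixes f :: "'a \<Rightarrow> ennreal"
  assumes "f \<in> borel_measurable (completion M)"
  obtains g where "g \<in> borel_measurable M" "\<And>x. x \<in> space M \<Longrightarrow> f x \<le> g x"
    "integral\<^sup>N M g = integral\<^sup>N (completion M) f"
proof -
  obtain g' where g': "g' \<in> borel_measurable M" "AE x in M. f x = g' x"
    using completion_ex_borel_measurable[OF assms] by blast
  obtain N where N: "N \<in> null_sets M" "{x \<in> space M. f x \<noteq> g' x} \<subseteq> N"
    using g'(2) unfolding eventually_ae_filter by blast
  define g where "g x = (if x \<in> N then \<infinity> else g' x)" for x
  have [measurable]: "N \<in> sets M"
    using N(1) by auto
  have "g \<in> borel_measurable M"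
    unfolding g_def using g'(1) by measurable
  moreover have "f x \<le> g x" if "x \<in> space M" for x
    using N(2) that by (auto simp: g_def)
  moreover have "AE x in M. g x = f x"
    using AE_not_in[OF N(1)] g'(2) by eventually_elim (auto simp: g_def)
  then have "integral\<^sup>N M g = integral\<^sup>N (completion M) f"
    by (simp add: nn_integral_completion nn_integral_cong_AE)
  ultimately show ?thesis using that by blast
qed

lemma nn_integral_lebesgue_on_le_lborel:
  assumes "U \<in> sets lebesgue" "\<And>x. x \<in> U \<Longrightarrow> f x \<le> g x"
  shows "(\<integral>\<^sup>+x. f x \<partial>lebesgue_on U) \<le> integral\<^sup>N lborel g"
proof -
  have "(\<integral>\<^sup>+x. f x \<partial>lebesgue_on U) = (\<integral>\<^sup>+x. f x * indicator U x \<partial>lebesgue)"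
    using assms(1) by (simp add: nn_integral_restrict_space)
  also have "\<dots> = (\<integral>\<^sup>+x. f x * indicator U x \<partial>lborel)"
    by (rule nn_integral_completion)
  also have "\<dots> \<le> integral\<^sup>N lborel g"
    using assms(2) by (intro nn_integral_mono) (auto simp: indicator_def)
  finally show ?thesis .
qed

lemma lborel_majorant_on:
  fixes f :: "'a::euclidean_space \<Rightarrow> ennreal"
  assumes \<Omega>: "\<Omega> \<in> lmeasurable" and f: "f \<in> borel_measurable (lebesgue_on \<Omega>)"
    and fin: "(\<integral>\<^sup>+x. f x \<partial>lebesgue_on \<Omega>) < \<infinity>"
  obtains Q where "Q \<in> borel_measurable lborel" "\<And>x. x \<in> \<Omega> \<Longrightarrow> f x + ennreal E \<le> Q x"
    "integral\<^sup>N lborel Q < \<infinity>"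
proof -
  have \<Omega>_sets: "\<Omega> \<in> sets lebesgue" using \<Omega> by (rule fmeasurableD)
  define Q0 where "Q0 x = (f x + ennreal E) * indicator \<Omega> x" for x
  have "(\<lambda>x. f x + ennreal E) \<in> borel_measurable (lebesgue_on \<Omega>)"
    using f by measurable
  then have Q0: "Q0 \<in> borel_measurable lebesgue"
    using \<Omega>_sets unfolding Q0_def by (simp add: borel_measurable_restrict_space_iff_ennreal)
  have "integral\<^sup>N lebesgue Q0 = (\<integral>\<^sup>+x. f x + ennreal E \<partial>lebesgue_on \<Omega>)"
    using \<Omega>_sets unfolding Q0_def by (simp add: nn_integral_restrict_space)
  also have "\<dots> = (\<integral>\<^sup>+x. f x \<partial>lebesgue_on \<Omega>) + ennreal E * emeasure lebesgue \<Omega>"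
    using f \<Omega>_sets by (simp add: nn_integral_add emeasure_restrict_space)
  also have "\<dots> < \<infinity>"
    using fin fmeasurableD2[OF \<Omega>] by (simp add: ennreal_mult_less_top less_top)
  finally have "integral\<^sup>N lebesgue Q0 < \<infinity>" .
  moreover obtain Q where Q: "Q \<in> borel_measurable lborel" "\<And>x. Q0 x \<le> Q x"
    "integral\<^sup>N lborel Q = integral\<^sup>N lebesgue Q0"
    using completion_ex_borel_majorant[OF Q0] by auto
  moreover have "f x + ennreal E \<le> Q x" if "x \<in> \<Omega>" for x
    using Q(2)[of x] that by (simp add: Q0_def)
  ultimately show ?thesis
    using that by simp
qed

lemma ennreal_ex_scale_le_1:
  fixes I :: ennreal
  assumes "I < \<infinity>"
  obtains s where "0 < s" "s \<le> 1" "ennreal s * I \<le> 1"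
proof -
  obtain r where r: "0 \<le> r" "I = ennreal r"
    using assms by (cases I) auto
  have "ennreal (1 / (r + 1)) * I = ennreal (r / (r + 1))"
    using r by (simp add: ennreal_mult[symmetric])
  also have "\<dots> \<le> 1"
    using r by (simp add: ennreal_le_1)
  finally show ?thesis
    using that[of "1 / (r + 1)"] r by simp
qed

subsection \<open>Orlicz spaces\<close>

lemma orlicz_space_modular_le_1:
  assumes "f \<in> orlicz_space \<Phi> U"
  obtains l where "l > 0" "ereal_integral_on U (\<lambda>x. \<Phi> (\<bar>f x\<bar> / l)) \<le> 1"
proof -
  have "luxemburg_norm \<Phi> U f \<noteq> \<infinity>"
    using assms by (simp add: orlicz_space_def)
  then have "{ereal l | l. l > 0 \<and> ereal_integral_on U (\<lambda>x. \<Phi> (\<bar>f x\<bar> / l)) \<le> 1} \<noteq> {}"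
    unfolding luxemburg_norm_def by (metis Inf_empty top_ereal_def)
  then show ?thesis
    using that by blast
qed

lemma orlicz_spaceI:
  assumes "f \<in> borel_measurable (lebesgue_on U)" "l > 0"
    "ereal_integral_on U (\<lambda>x. \<Phi> (\<bar>f x\<bar> / l)) \<le> 1"
  shows "f \<in> orlicz_space \<Phi> U"
proof -
  have "luxemburg_norm \<Phi> U f \<le> ereal l"
    unfolding luxemburg_norm_def using assms(2,3) by (intro Inf_lower) blast
  then show ?thesis
    using assms(1) by (auto simp: orlicz_space_def le_less_trans)
qed

lemma orlicz_space_lborel_majorant:
  fixes \<mu> :: "'a::euclidean_space \<Rightarrow> real"
  assumes qy: "quasi_young_fun \<Phi>" and \<Omega>: "\<Omega> \<in> lmeasurable" and \<mu>: "\<mu> \<in> orlicz_space \<Phi> \<Omega>"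
  obtains l Q where "l > 0" "Q \<in> borel_measurable lborel"
    "\<And>x. x \<in> \<Omega> \<Longrightarrow> e2ennreal (\<Phi> (\<bar>\<mu> x\<bar> / l)) + ennreal E \<le> Q x" "integral\<^sup>N lborel Q < \<infinity>"
proof -
  obtain l where l: "l > 0" "ereal_integral_on \<Omega> (\<lambda>x. \<Phi> (\<bar>\<mu> x\<bar> / l)) \<le> 1"
    using orlicz_space_modular_le_1[OF \<mu>] by blast
  obtain c where c: "\<And>t. 0 \<le> t \<Longrightarrow> ereal c \<le> \<Phi> t"
    using quasi_young_fun_bounded_below[OF qy] by blast
  have [measurable]: "(\<lambda>t. \<Phi> \<bar>t\<bar>) \<in> borel_measurable borel"
    using qy borel_measurable_lsc_nonneg_abs unfolding quasi_young_fun_def by blast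
  have [measurable]: "\<mu> \<in> borel_measurable (lebesgue_on \<Omega>)"
    using \<mu> by (simp add: orlicz_space_def)
  have "(\<lambda>x. e2ennreal (\<Phi> \<bar>\<mu> x / l\<bar>)) \<in> borel_measurable (lebesgue_on \<Omega>)"
    by measurable
  then have meas: "(\<lambda>x. e2ennreal (\<Phi> (\<bar>\<mu> x\<bar> / l))) \<in> borel_measurable (lebesgue_on \<Omega>)"
    using l(1) by (simp add: abs_divide)
  have "(\<integral>\<^sup>+x. e2ennreal (\<Phi> (\<bar>\<mu> x\<bar> / l)) \<partial>lebesgue_on \<Omega>) < \<infinity>"
    by (rule nn_integral_pos_part_finite[OF \<Omega>, of c]) (use l c in auto)
  then obtain Q where "Q \<in> borel_measurable lborel"
    "\<And>x. x \<in> \<Omega> \<Longrightarrow> e2ennreal (\<Phi> (\<bar>\<mu> x\<bar> / l)) + ennreal E \<le> Q x" "integral\<^sup>N lborel Q < \<infinity>"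
    using lborel_majorant_on[OF \<Omega> meas] by blast
  with l(1) show ?thesis
    using that by blast
qed

lemma tensor_modular_le_1:
  fixes \<Omega>1 :: "'a::euclidean_space set" and \<Omega>2 :: "'b::euclidean_space set"
  assumes qy: "quasi_young_fun \<Phi>" and dom: "product_dominated \<Phi> D E"
    and \<Omega>: "\<Omega>1 \<in> lmeasurable" "\<Omega>2 \<in> lmeasurable"
    and \<mu>: "\<mu>1 \<in> orlicz_space \<Phi> \<Omega>1" "\<mu>2 \<in> orlicz_space \<Phi> \<Omega>2"
  obtains l where "l > 0" "ereal_integral_on (\<Omega>1 \<times> \<Omega>2) (\<lambda>z. \<Phi> (\<bar>tensor \<mu>1 \<mu>2 z\<bar> / l)) \<le> 1"
proof -
  obtain l1 Q1 where l1: "l1 > 0" and Q1: "Q1 \<in> borel_measurable lborel"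
    "\<And>x. x \<in> \<Omega>1 \<Longrightarrow> e2ennreal (\<Phi> (\<bar>\<mu>1 x\<bar> / l1)) + ennreal E \<le> Q1 x" "integral\<^sup>N lborel Q1 < \<infinity>"
    using orlicz_space_lborel_majorant[OF qy \<Omega>(1) \<mu>(1)] by blast
  obtain l2 Q2 where l2: "l2 > 0" and Q2: "Q2 \<in> borel_measurable lborel"
    "\<And>x. x \<in> \<Omega>2 \<Longrightarrow> e2ennreal (\<Phi> (\<bar>\<mu>2 x\<bar> / l2)) + ennreal E \<le> Q2 x" "integral\<^sup>N lborel Q2 < \<infinity>"
    using orlicz_space_lborel_majorant[OF qy \<Omega>(2) \<mu>(2)] by blast
  define H where "H z = ennreal D * (Q1 (fst z) * Q2 (snd z))" for z :: "'a \<times> 'b"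
  have [measurable]: "H \<in> borel_measurable lborel"
    using Q1(1) Q2(1) unfolding H_def lborel_prod[symmetric] by measurable
  have "integral\<^sup>N lborel H = ennreal D * (integral\<^sup>N lborel Q1 * integral\<^sup>N lborel Q2)"
    using Q1(1) Q2(1) unfolding H_def lborel_prod[symmetric]
    by (simp add: nn_integral_cmult lborel_pair.nn_integral_fst_snd_mult)
  then have "integral\<^sup>N lborel H < \<infinity>"
    using Q1(3) Q2(3) by (simp add: ennreal_mult_less_top)
  then obtain s where s: "0 < s" "s \<le> 1" "ennreal s * integral\<^sup>N lborel H \<le> 1"
    by (rule ennreal_ex_scale_le_1)
  define l where "l = l1 * l2 / s"
  have "e2ennreal (\<Phi> (\<bar>tensor \<mu>1 \<mu>2 z\<bar> / l)) \<le> ennreal s * H z" if z\<Omega>: "z \<in> \<Omega>1 \<times> \<Omega>2" for z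
  proof -
    obtain x1 x2 where z: "z = (x1, x2)" "x1 \<in> \<Omega>1" "x2 \<in> \<Omega>2"
      using z\<Omega> by (cases z) auto
    define a b where "a = \<bar>\<mu>1 x1\<bar> / l1" and "b = \<bar>\<mu>2 x2\<bar> / l2"
    have "\<bar>tensor \<mu>1 \<mu>2 z\<bar> / l = s * (a * b)"
      using l1 l2 s by (simp add: z tensor_def l_def a_def b_def abs_mult field_simps)
    then have "e2ennreal (\<Phi> (\<bar>tensor \<mu>1 \<mu>2 z\<bar> / l))
        \<le> ennreal s * (ennreal D * ((e2ennreal (\<Phi> a) + ennreal E) * (e2ennreal (\<Phi> b) + ennreal E)))"
      using product_dominated_scaled[OF qy dom, of s a b] s l1 l2 by (simp add: a_def b_def mult.assoc)
    also have "\<dots> \<le> ennreal s * H z"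
      using Q1(2)[OF z(2)] Q2(2)[OF z(3)] unfolding H_def z a_def b_def
      by (intro mult_left_mono mult_mono) auto
    finally show ?thesis .
  qed
  then have "(\<integral>\<^sup>+z. e2ennreal (\<Phi> (\<bar>tensor \<mu>1 \<mu>2 z\<bar> / l)) \<partial>lebesgue_on (\<Omega>1 \<times> \<Omega>2))
      \<le> (\<integral>\<^sup>+z. ennreal s * H z \<partial>lborel)"
    using \<Omega> by (intro nn_integral_lebesgue_on_le_lborel sets_lebesgue_Times) auto
  also have "\<dots> \<le> 1"
    using s(3) by (simp add: nn_integral_cmult)
  finally have "ereal_integral_on (\<Omega>1 \<times> \<Omega>2) (\<lambda>z. \<Phi> (\<bar>tensor \<mu>1 \<mu>2 z\<bar> / l)) \<le> 1"
    using ereal_integral_on_le_pos_part order_trans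
    by (fastforce simp: less_eq_ennreal.rep_eq one_ennreal.rep_eq)
  moreover have "l > 0"
    using l1 l2 s by (simp add: l_def)
  ultimately show ?thesis
    using that by blast
qed

theorem mainTheorem2:
  fixes \<Omega>1 \<Omega>2 :: "(real ^ 'n) set" and \<Phi> :: "real \<Rightarrow> ereal"
    and \<mu>1 \<mu>2 :: "real ^ 'n \<Rightarrow> real"
  assumes "\<Omega>1 \<in> sets lebesgue" "bounded \<Omega>1"
    and "\<Omega>2 \<in> sets lebesgue" "bounded \<Omega>2"
    and "quasi_young_fun \<Phi>"
    and "(\<exists>C>0. \<forall>x\<ge>0. \<forall>y\<ge>0. \<Phi> (x * y) \<le> ereal C * \<Phi> x * \<Phi> y)
       \<or> ((\<exists>C1\<ge>0. \<exists>C2\<ge>0. \<forall>x\<ge>0. \<forall>y\<ge>0.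
              \<Phi> (x * y) \<le> ereal C1 * ereal x * \<Phi> y + ereal C2 * \<Phi> x * ereal y)
           \<and> ((\<lambda>t. \<Phi> t / ereal t) \<longlongrightarrow> \<infinity>) at_top)"
    and "\<mu>1 \<in> orlicz_space \<Phi> \<Omega>1" "\<mu>2 \<in> orlicz_space \<Phi> \<Omega>2"
  shows "tensor \<mu>1 \<mu>2 \<in> orlicz_space \<Phi> (\<Omega>1 \<times> \<Omega>2)"
proof -
  have \<Omega>: "\<Omega>1 \<in> lmeasurable" "\<Omega>2 \<in> lmeasurable"
    using assms(1-4) by (auto intro: bounded_set_imp_lmeasurable)
  obtain D E where "product_dominated \<Phi> D E"
    using assms(6)
  proof (elim disjE exE conjE)
    fix C assume "C > 0" "\<forall>x\<ge>0. \<forall>y\<ge>0. \<Phi> (x * y) \<le> ereal C * \<Phi> x * \<Phi> y"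
    then show thesis
      by (rule submultiplicative_product_dominated[OF assms(5)]) (rule that)
  next
    fix C1 C2 assume "C1 \<ge> 0" "C2 \<ge> 0"
      "\<forall>x\<ge>0. \<forall>y\<ge>0. \<Phi> (x * y) \<le> ereal C1 * ereal x * \<Phi> y + ereal C2 * \<Phi> x * ereal y"
      "((\<lambda>t. \<Phi> t / ereal t) \<longlongrightarrow> \<infinity>) at_top"
    then show thesis
      by (rule superlinear_product_dominated[OF assms(5)]) (rule that)
  qed
  then obtain l where "l > 0" "ereal_integral_on (\<Omega>1 \<times> \<Omega>2) (\<lambda>z. \<Phi> (\<bar>tensor \<mu>1 \<mu>2 z\<bar> / l)) \<le> 1"
    using \<Omega> assms(7,8) by (rule tensor_modular_le_1[OF assms(5)])
  moreover have "tensor \<mu>1 \<mu>2 \<in> borel_measurable (lebesgue_on (\<Omega>1 \<times> \<Omega>2))"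
    using assms(1,3,7,8) by (intro borel_measurable_lebesgue_on_tensor) (auto simp: orlicz_space_def)
  ultimately show ?thesis
    by (simp add: orlicz_spaceI)
qed

end
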